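(* Let $(X,d)$ be a complete metric space, let $F:(0,\infty)\to\mathbb{R}$ have a finite right limit $\lim_{s\to t^+}F(s)$ at every point $t>0$, and let $\varphi:(0,\infty)\to(0,\infty)$ satisfy: for every $t>0$ and every sequence $(t_n)\subset(t,\infty)$ with $t_n\to t$, $\limsup_{n\to\infty}\varphi(t_n)>0$. Let $T:X\to X$ be contractive and such that for all $x,y\in X$ with $Tx\neq Ty$, $$\varphi(d(x,y))+F(d(Tx,Ty))\le F(d(x,y)).$$ Then $T$ is a CJMP-contraction.
   Context: $T$ is contractive if $d(Tx,Ty)<d(x,y)$ for all $x\neq y$. $T$ is a CJMP-contraction if it is contractive and for every $\varepsilon>0$ there exists $\delta>0$ such that for all $x,y\in X$, $\varepsilon<d(x,y)<\varepsilon+\delta$ implies $d(Tx,Ty)\le\varepsilon$. *)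

theory Defs
  imports "HOL-Analysis.Analysis"
begin

definition contractive :: "('a::metric_space \<Rightarrow> 'a) \<Rightarrow> bool" where
  "contractive T \<longleftrightarrow> (\<forall>x y. x \<noteq> y \<longrightarrow> dist (T x) (T y) < dist x y)"

definition CJMP_contraction :: "('a::metric_space \<Rightarrow> 'a) \<Rightarrow> bool" where
  "CJMP_contraction T \<longleftrightarrow> contractive T \<and>
     (\<forall>\<epsilon>>0. \<exists>\<delta>>0. \<forall>x y. \<epsilon> < dist x y \<and> dist x y < \<epsilon> + \<delta> \<longrightarrow> dist (T x) (T y) \<le> \<epsilon>)"

end

theory Submission
  imports Defs
begin

text \<open>
  If a contractive \<open>T\<close> is not a CJMP-contraction, there are \<open>\<epsilon> > 0\<close> and pairs
  \<open>(x\<^sub>n, y\<^sub>n)\<close> with \<open>\<epsilon> < d(Tx\<^sub>n, Ty\<^sub>n) < d(x\<^sub>n, y\<^sub>n) \<rightarrow> \<epsilon>\<close>. Both distance sequences then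
  approach \<open>\<epsilon>\<close> from the right, so \<open>F(d(x\<^sub>n, y\<^sub>n)) - F(d(Tx\<^sub>n, Ty\<^sub>n)) \<rightarrow> 0\<close> by the existence
  of the right limit of \<open>F\<close> at \<open>\<epsilon>\<close>. The contractive inequality bounds \<open>\<phi>(d(x\<^sub>n, y\<^sub>n))\<close> by
  this difference, so its limsup is \<open>\<le> 0\<close>, contradicting the hypothesis on \<open>\<phi>\<close>.
\<close>

lemma not_CJMP_contraction_witnesses:
  fixes T :: "'a::metric_space \<Rightarrow> 'a"
  assumes "contractive T" and "\<not> CJMP_contraction T"
  obtains \<epsilon> and x y :: "nat \<Rightarrow> 'a"
  where "\<epsilon> > 0"
    and "\<And>n. \<epsilon> < dist (x n) (y n)" and "(\<lambda>n. dist (x n) (y n)) \<longlonglongrightarrow> \<epsilon>"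
    and "\<And>n. \<epsilon> < dist (T (x n)) (T (y n))" and "(\<lambda>n. dist (T (x n)) (T (y n))) \<longlonglongrightarrow> \<epsilon>"
proof -
  from assms obtain \<epsilon> where "\<epsilon> > 0" and
    "\<forall>\<delta>>0. \<exists>x y. \<epsilon> < dist x y \<and> dist x y < \<epsilon> + \<delta> \<and> \<epsilon> < dist (T x) (T y)"
    unfolding CJMP_contraction_def by (auto simp: not_le)
  then have "\<forall>n. \<exists>x y. \<epsilon> < dist x y \<and> dist x y < \<epsilon> + inverse (Suc n) \<and> \<epsilon> < dist (T x) (T y)"
    by simp
  then obtain x y where
    xy: "\<And>n. \<epsilon> < dist (x n) (y n) \<and> dist (x n) (y n) < \<epsilon> + inverse (Suc n)
               \<and> \<epsilon> < dist (T (x n)) (T (y n))"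
    by metis
  have Txy_lt: "dist (T (x n)) (T (y n)) < dist (x n) (y n)" for n
  proof -
    have "x n \<noteq> y n"
      using xy[of n] \<open>\<epsilon> > 0\<close> by auto
    with \<open>contractive T\<close> show ?thesis
      by (simp add: contractive_def)
  qed
  have lim: "(\<lambda>n. dist (x n) (y n)) \<longlonglongrightarrow> \<epsilon>"
    by (rule real_tendsto_sandwich[OF _ _ tendsto_const LIMSEQ_inverse_real_of_nat_add])
      (use xy in \<open>auto intro: always_eventually less_imp_le\<close>)
  moreover have "(\<lambda>n. dist (T (x n)) (T (y n))) \<longlonglongrightarrow> \<epsilon>"
    by (rule real_tendsto_sandwich[OF _ _ tendsto_const lim])
      (use xy Txy_lt in \<open>auto intro: always_eventually less_imp_le\<close>)
  ultimately show thesis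
    using that \<open>\<epsilon> > 0\<close> xy by blast
qed

lemma tendsto_right_limit_diff_zero:
  fixes F :: "real \<Rightarrow> 'b::real_normed_vector"
  assumes "(F \<longlongrightarrow> L) (at_right t)"
    and "\<And>n. t < s n" and "s \<longlonglongrightarrow> t" and "\<And>n. t < r n" and "r \<longlonglongrightarrow> t"
  shows "(\<lambda>n. F (s n) - F (r n)) \<longlonglongrightarrow> 0"
proof -
  have "(\<lambda>n. F (s n)) \<longlonglongrightarrow> L" "(\<lambda>n. F (r n)) \<longlonglongrightarrow> L"
    using assms
    by (auto intro!: filterlim_compose[OF assms(1)] tendsto_imp_filterlim_at_right always_eventually)
  then show ?thesis
    using tendsto_diff by fastforce
qed

lemma limsup_ereal_le_limit:
  fixes a b :: "nat \<Rightarrow> real"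
  assumes "\<And>n. a n \<le> b n" and "b \<longlonglongrightarrow> c"
  shows "limsup (\<lambda>n. ereal (a n)) \<le> ereal c"
proof -
  have "limsup (\<lambda>n. ereal (a n)) \<le> limsup (\<lambda>n. ereal (b n))"
    by (rule Limsup_mono) (simp add: assms(1))
  also have "\<dots> = ereal c"
    using assms(2) by (intro lim_imp_Limsup) auto
  finally show ?thesis .
qed

theorem mainTheorem6:
  fixes T :: "'a::complete_space \<Rightarrow> 'a"
    and F :: "real \<Rightarrow> real"
    and \<phi> :: "real \<Rightarrow> real"
  assumes F_right_lim: "\<forall>t>0. \<exists>L. (F \<longlongrightarrow> L) (at_right t)"
    and \<phi>_pos: "\<forall>t>0. \<phi> t > 0"
    and \<phi>_limsup: "\<forall>t>0. \<forall>s::nat \<Rightarrow> real. (\<forall>n. s n > t) \<and> s \<longlonglongrightarrow> t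
                      \<longrightarrow> limsup (\<lambda>n. ereal (\<phi> (s n))) > 0"
    and T_contractive: "contractive T"
    and T_ineq: "\<forall>x y. T x \<noteq> T y \<longrightarrow> \<phi> (dist x y) + F (dist (T x) (T y)) \<le> F (dist x y)"
  shows "CJMP_contraction T"
proof (rule ccontr)
  assume "\<not> CJMP_contraction T"
  then obtain \<epsilon> and x y :: "nat \<Rightarrow> 'a"
    where "\<epsilon> > 0"
      and s_gt: "\<And>n. \<epsilon> < dist (x n) (y n)" and s_lim: "(\<lambda>n. dist (x n) (y n)) \<longlonglongrightarrow> \<epsilon>"
      and r_gt: "\<And>n. \<epsilon> < dist (T (x n)) (T (y n))" and r_lim: "(\<lambda>n. dist (T (x n)) (T (y n))) \<longlonglongrightarrow> \<epsilon>"
    using not_CJMP_contraction_witnesses[OF T_contractive] by blast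
  define s where "s n = dist (x n) (y n)" for n
  define r where "r n = dist (T (x n)) (T (y n))" for n
  have "\<phi> (s n) \<le> F (s n) - F (r n)" for n
  proof -
    have "T (x n) \<noteq> T (y n)"
      using r_gt[of n] \<open>\<epsilon> > 0\<close> by auto
    then have "\<phi> (s n) + F (r n) \<le> F (s n)"
      using T_ineq[rule_format, of "x n" "y n"] by (simp add: s_def r_def)
    then show ?thesis
      by simp
  qed
  moreover obtain L where "(F \<longlongrightarrow> L) (at_right \<epsilon>)"
    using F_right_lim \<open>\<epsilon> > 0\<close> by blast
  then have "(\<lambda>n. F (s n) - F (r n)) \<longlonglongrightarrow> 0"
    using s_gt s_lim r_gt r_lim unfolding s_def r_def by (rule tendsto_right_limit_diff_zero)
  ultimately have "limsup (\<lambda>n. ereal (\<phi> (s n))) \<le> ereal 0"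
    by (rule limsup_ereal_le_limit)
  moreover have "limsup (\<lambda>n. ereal (\<phi> (s n))) > 0"
    using \<phi>_limsup \<open>\<epsilon> > 0\<close> s_gt s_lim by (simp add: s_def)
  ultimately show False
    by (simp add: zero_ereal_def)
qed

end
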